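(* Let $\bar{w}$ be a nice sequence. Then: (1) $(x\;\bar{w}) \in \mathcal{N}$ for every $\lambda$-variable $x$. (2) If $u \in \mathcal{N}$ and $(t[x:=u]\;\bar{w}) \in \mathcal{N}$, then $((\lambda x.t\;u)\;\bar{w}) \in \mathcal{N}$. (3) If $t_1,t_2 \in \mathcal{N}$ and $(t_i\;\bar{w}) \in \mathcal{N}$ (for $i\in\{1,2\}$), then $((\langle t_1,t_2\rangle\;\pi_i)\;\bar{w}) \in \mathcal{N}$. (4) If $t,u_1,u_2 \in \mathcal{N}$ and $u_i[x_i:=t] \in \mathcal{N}$ (for $i\in\{1,2\}$), then $(\omega_i t\;[x_1.u_1,x_2.u_2]) \in \mathcal{N}$. (5) If $t[a:=^*\bar{w}] \in \mathcal{N}$, then $(\mu a.t\;\bar{w}) \in \mathcal{N}$.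
   Context: With disjoint sets of $\lambda$-variables $x,y,\dots$ and $\mu$-variables $a,b,\dots$, terms and $\mathcal{E}$-terms are $\mathcal{T} ::= x \mid \lambda x.\mathcal{T} \mid (\mathcal{T}\;\mathcal{E}) \mid \langle \mathcal{T},\mathcal{T}\rangle \mid \omega_1\mathcal{T} \mid \omega_2\mathcal{T} \mid \mu a.\mathcal{T} \mid (a\;\mathcal{T})$, $\mathcal{E} ::= \mathcal{T} \mid \pi_1 \mid \pi_2 \mid [x.\mathcal{T}, y.\mathcal{T}]$ (up to renaming of bound variables). The one-step reduction $\triangleright$ is the closure under all constructors of: $(\lambda x.u\;v)\triangleright u[x:=v]$; $(\langle t_1,t_2\rangle\;\pi_i)\triangleright t_i$; $(\omega_i t\;[x_1.u_1,x_2.u_2])\triangleright u_i[x_i:=t]$; $((t\;[x_1.u_1,x_2.u_2])\;\varepsilon)\triangleright(t\;[x_1.(u_1\;\varepsilon),x_2.(u_2\;\varepsilon)])$; $(\mu a.t\;\varepsilon)\triangleright\mu a.t[a:=^*\varepsilon]$, where $t[a:=^*\varepsilon]$ replaces inductively each subterm $(a\;v)$ by $(a\;(v\;\varepsilon))$. $\mathcal{N}$ (resp. $\mathcal{N}'$) is the set of strongly normalizable terms (resp. $\mathcal{E}$-terms), i.e. those admitting no infinite $\triangleright$-reduction sequence. For a finite sequence $\bar{w}=w_1\dots w_n$ of $\mathcal{E}$-terms and a term $t$: $(t\;\bar{w})$ is $t$ if $n=0$ and $((t\;w_1)\;w_2\dots w_n)$ otherwise; $t[a:=^*\bar{w}]$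 is obtained from $t$ by replacing inductively each subterm $(a\;v)$ by $(a\;(v\;\bar{w}))$. A finite sequence $\bar{w}=w_1\dots w_n$ of elements of $\mathcal{N}'$ is a nice sequence iff none of $w_1,\dots,w_{n-1}$ is of the form $[x.u,y.v]$ (only $w_n$ may be). *)

theory Defs
  imports Main
begin

text \<open>Terms of the lambda-mu calculus with pairs and sums, in de Bruijn notation.
  lambda-variables and mu-variables live in two separate index spaces.
  Binders: Lam binds a lambda-variable; each branch of Case binds a lambda-variable;
  Mu binds a mu-variable.  trm = T, elim = E (an E-term is a term (Arg), pi1, pi2,
  or a case [x.u, y.v]).\<close>

datatype trm =
    Var nat
  | Lam trm
  | App trm elim
  | Pair trm trm
  | Inj1 trm
  | Inj2 trm
  | Mu trm
  | Named nat trm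
and elim =
    Arg trm
  | Proj1
  | Proj2
  | Case trm trm

primrec liftl :: "nat \<Rightarrow> trm \<Rightarrow> trm" and liftl_e :: "nat \<Rightarrow> elim \<Rightarrow> elim" where
  "liftl k (Var i) = (if i < k then Var i else Var (Suc i))"
| "liftl k (Lam t) = Lam (liftl (Suc k) t)"
| "liftl k (App t e) = App (liftl k t) (liftl_e k e)"
| "liftl k (Pair t1 t2) = Pair (liftl k t1) (liftl k t2)"
| "liftl k (Inj1 t) = Inj1 (liftl k t)"
| "liftl k (Inj2 t) = Inj2 (liftl k t)"
| "liftl k (Mu t) = Mu (liftl k t)"
| "liftl k (Named a t) = Named a (liftl k t)"
| "liftl_e k (Arg t) = Arg (liftl k t)"
| "liftl_e k Proj1 = Proj1"
| "liftl_e k Proj2 = Proj2"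
| "liftl_e k (Case u v) = Case (liftl (Suc k) u) (liftl (Suc k) v)"

primrec liftm :: "nat \<Rightarrow> trm \<Rightarrow> trm" and liftm_e :: "nat \<Rightarrow> elim \<Rightarrow> elim" where
  "liftm k (Var i) = Var i"
| "liftm k (Lam t) = Lam (liftm k t)"
| "liftm k (App t e) = App (liftm k t) (liftm_e k e)"
| "liftm k (Pair t1 t2) = Pair (liftm k t1) (liftm k t2)"
| "liftm k (Inj1 t) = Inj1 (liftm k t)"
| "liftm k (Inj2 t) = Inj2 (liftm k t)"
| "liftm k (Mu t) = Mu (liftm (Suc k) t)"
| "liftm k (Named a t) = Named (if a < k then a else Suc a) (liftm k t)"
| "liftm_e k (Arg t) = Arg (liftm k t)"
| "liftm_e k Proj1 = Proj1"
| "liftm_e k Proj2 = Proj2"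
| "liftm_e k (Case u v) = Case (liftm k u) (liftm k v)"

primrec subst :: "trm \<Rightarrow> nat \<Rightarrow> trm \<Rightarrow> trm" and subst_e :: "elim \<Rightarrow> nat \<Rightarrow> trm \<Rightarrow> elim" where
  "subst (Var i) k s = (if i < k then Var i else if i = k then s else Var (i - 1))"
| "subst (Lam t) k s = Lam (subst t (Suc k) (liftl 0 s))"
| "subst (App t e) k s = App (subst t k s) (subst_e e k s)"
| "subst (Pair t1 t2) k s = Pair (subst t1 k s) (subst t2 k s)"
| "subst (Inj1 t) k s = Inj1 (subst t k s)"
| "subst (Inj2 t) k s = Inj2 (subst t k s)"
| "subst (Mu t) k s = Mu (subst t k (liftm 0 s))"
| "subst (Named a t) k s = Named a (subst t k s)"
| "subst_e (Arg t) k s = Arg (subst t k s)"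
| "subst_e Proj1 k s = Proj1"
| "subst_e Proj2 k s = Proj2"
| "subst_e (Case u v) k s = Case (subst u (Suc k) (liftl 0 s)) (subst v (Suc k) (liftl 0 s))"

fun apps :: "trm \<Rightarrow> elim list \<Rightarrow> trm" where
  "apps t [] = t"
| "apps t (w # ws) = apps (App t w) ws"

text \<open>Structural substitution t[a :=* ws]: every subterm (a v) becomes (a (v ws)).\<close>
primrec ssubst :: "trm \<Rightarrow> nat \<Rightarrow> elim list \<Rightarrow> trm"
  and ssubst_e :: "elim \<Rightarrow> nat \<Rightarrow> elim list \<Rightarrow> elim" where
  "ssubst (Var i) a ws = Var i"
| "ssubst (Lam t) a ws = Lam (ssubst t a (map (liftl_e 0) ws))"
| "ssubst (App t e) a ws = App (ssubst t a ws) (ssubst_e e a ws)"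
| "ssubst (Pair t1 t2) a ws = Pair (ssubst t1 a ws) (ssubst t2 a ws)"
| "ssubst (Inj1 t) a ws = Inj1 (ssubst t a ws)"
| "ssubst (Inj2 t) a ws = Inj2 (ssubst t a ws)"
| "ssubst (Mu t) a ws = Mu (ssubst t (Suc a) (map (liftm_e 0) ws))"
| "ssubst (Named b t) a ws =
     (if b = a then Named b (apps (ssubst t a ws) ws) else Named b (ssubst t a ws))"
| "ssubst_e (Arg t) a ws = Arg (ssubst t a ws)"
| "ssubst_e Proj1 a ws = Proj1"
| "ssubst_e Proj2 a ws = Proj2"
| "ssubst_e (Case u v) a ws =
     Case (ssubst u a (map (liftl_e 0) ws)) (ssubst v a (map (liftl_e 0) ws))"

inductive red :: "trm \<Rightarrow> trm \<Rightarrow> bool" and red_e :: "elim \<Rightarrow> elim \<Rightarrow> bool" where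
  beta: "red (App (Lam u) (Arg v)) (subst u 0 v)"
| proj1: "red (App (Pair t1 t2) Proj1) t1"
| proj2: "red (App (Pair t1 t2) Proj2) t2"
| case1: "red (App (Inj1 t) (Case u1 u2)) (subst u1 0 t)"
| case2: "red (App (Inj2 t) (Case u1 u2)) (subst u2 0 t)"
| comm: "red (App (App t (Case u1 u2)) e)
             (App t (Case (App u1 (liftl_e 0 e)) (App u2 (liftl_e 0 e))))"
| mu: "red (App (Mu t) e) (Mu (ssubst t 0 [liftm_e 0 e]))"
| c_Lam: "red t t' \<Longrightarrow> red (Lam t) (Lam t')"
| c_AppL: "red t t' \<Longrightarrow> red (App t e) (App t' e)"
| c_AppR: "red_e e e' \<Longrightarrow> red (App t e) (App t e')"
| c_PairL: "red t t' \<Longrightarrow> red (Pair t u) (Pair t' u)"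
| c_PairR: "red u u' \<Longrightarrow> red (Pair t u) (Pair t u')"
| c_Inj1: "red t t' \<Longrightarrow> red (Inj1 t) (Inj1 t')"
| c_Inj2: "red t t' \<Longrightarrow> red (Inj2 t) (Inj2 t')"
| c_Mu: "red t t' \<Longrightarrow> red (Mu t) (Mu t')"
| c_Named: "red t t' \<Longrightarrow> red (Named a t) (Named a t')"
| c_Arg: "red t t' \<Longrightarrow> red_e (Arg t) (Arg t')"
| c_CaseL: "red u u' \<Longrightarrow> red_e (Case u v) (Case u' v)"
| c_CaseR: "red v v' \<Longrightarrow> red_e (Case u v) (Case u v')"

definition SN :: "trm \<Rightarrow> bool" where
  "SN t \<longleftrightarrow> \<not> (\<exists>f. f 0 = t \<and> (\<forall>n. red (f n) (f (Suc n))))"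

definition SN_e :: "elim \<Rightarrow> bool" where
  "SN_e e \<longleftrightarrow> \<not> (\<exists>f. f 0 = e \<and> (\<forall>n. red_e (f n) (f (Suc n))))"

definition is_case :: "elim \<Rightarrow> bool" where
  "is_case w \<longleftrightarrow> (\<exists>u v. w = Case u v)"

definition nice :: "elim list \<Rightarrow> bool" where
  "nice ws \<longleftrightarrow> (\<forall>w\<in>set ws. SN_e w) \<and> (\<forall>i. i + 1 < length ws \<longrightarrow> \<not> is_case (ws ! i))"

end

theory Submission
  imports Defs
begin

text \<open>A reduct of \<open>(H w\<^sub>1 \<dots> w\<^sub>n)\<close> arises by reducing inside \<open>H\<close>, inside some \<open>w\<^sub>i\<close>, or by a
  root step on \<open>(H w\<^sub>1)\<close>; a commutation at \<open>((H w\<^sub>1 \<dots> w\<^sub>i) w\<^sub>i\<^sub>+\<^sub>1)\<close> would need \<open>w\<^sub>i\<close> to be a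
  case, which niceness excludes.  So in parts (2)--(4) one inducts on the strong
  normalisability of the components of the redex and of \<open>w\<^sub>1 \<dots> w\<^sub>n\<close>: every reduct either
  has the same shape with reduced components, or is the contractum applied to \<open>w\<^sub>1 \<dots> w\<^sub>n\<close>,
  and reducing the components only reduces that contractum.  In part (5) the root step
  pushes \<open>w\<^sub>1\<close> into the body of the \<open>\<mu>\<close>, so an outer induction on \<open>n\<close> applies.\<close>

section \<open>Lifting and substitution\<close>

lemma liftl_liftl:
  "i \<le> j \<Longrightarrow> liftl i (liftl j t) = liftl (Suc j) (liftl i t)"
  "i \<le> j \<Longrightarrow> liftl_e i (liftl_e j e) = liftl_e (Suc j) (liftl_e i e)"
  by (induct t and e arbitrary: i j and i j) auto

lemma liftm_liftm:
  "i \<le> j \<Longrightarrow> liftm i (liftm j t) = liftm (Suc j) (liftm i t)"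
  "i \<le> j \<Longrightarrow> liftm_e i (liftm_e j e) = liftm_e (Suc j) (liftm_e i e)"
  by (induct t and e arbitrary: i j and i j) auto

lemma liftl_liftm:
  "liftl i (liftm j t) = liftm j (liftl i t)"
  "liftl_e i (liftm_e j e) = liftm_e j (liftl_e i e)"
  by (induct t and e arbitrary: i j and i j) auto

lemma subst_liftl:
  "subst (liftl k t) k s = t"
  "subst_e (liftl_e k e) k s = e"
  by (induct t and e arbitrary: k s and k s) auto

lemma liftl_subst_above:
  "i \<le> k \<Longrightarrow> liftl i (subst t k s) = subst (liftl i t) (Suc k) (liftl i s)"
  "i \<le> k \<Longrightarrow> liftl_e i (subst_e e k s) = subst_e (liftl_e i e) (Suc k) (liftl i s)"
  by (induct t and e arbitrary: i k s and i k s)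
     (auto simp: liftl_liftl liftl_liftm)

lemma liftl_subst_below:
  "k \<le> i \<Longrightarrow> liftl i (subst t k s) = subst (liftl (Suc i) t) k (liftl i s)"
  "k \<le> i \<Longrightarrow> liftl_e i (subst_e e k s) = subst_e (liftl_e (Suc i) e) k (liftl i s)"
  by (induct t and e arbitrary: i k s and i k s)
     (auto simp: liftl_liftl liftl_liftm)

lemma liftm_subst:
  "liftm j (subst t k s) = subst (liftm j t) k (liftm j s)"
  "liftm_e j (subst_e e k s) = subst_e (liftm_e j e) k (liftm j s)"
  by (induct t and e arbitrary: j k s and j k s)
     (auto simp: liftm_liftm liftl_liftm)

lemma subst_subst:
  "i \<le> k \<Longrightarrow> subst (subst t i u) k s = subst (subst t (Suc k) (liftl i s)) i (subst u k s)"
  "i \<le> k \<Longrightarrow> subst_e (subst_e e i u) k s = subst_e (subst_e e (Suc k) (liftl i s)) i (subst u k s)"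
  by (induct t and e arbitrary: i k u s and i k u s)
     (auto simp: liftl_liftl liftl_liftm liftm_subst liftl_subst_above subst_liftl)

primrec mu_occurs :: "nat \<Rightarrow> trm \<Rightarrow> bool" and mu_occurs_e :: "nat \<Rightarrow> elim \<Rightarrow> bool" where
  "mu_occurs a (Var i) = False"
| "mu_occurs a (Lam t) = mu_occurs a t"
| "mu_occurs a (App t e) = (mu_occurs a t \<or> mu_occurs_e a e)"
| "mu_occurs a (trm.Pair t1 t2) = (mu_occurs a t1 \<or> mu_occurs a t2)"
| "mu_occurs a (Inj1 t) = mu_occurs a t"
| "mu_occurs a (Inj2 t) = mu_occurs a t"
| "mu_occurs a (Mu t) = mu_occurs (Suc a) t"
| "mu_occurs a (Named b t) = (b = a \<or> mu_occurs a t)"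
| "mu_occurs_e a (Arg t) = mu_occurs a t"
| "mu_occurs_e a Proj1 = False"
| "mu_occurs_e a Proj2 = False"
| "mu_occurs_e a (Case u v) = (mu_occurs a u \<or> mu_occurs a v)"

lemma mu_occurs_liftl:
  "mu_occurs a (liftl k t) = mu_occurs a t"
  "mu_occurs_e a (liftl_e k e) = mu_occurs_e a e"
  by (induct t and e arbitrary: a k and a k) auto

lemma mu_occurs_liftm:
  "k \<le> a \<Longrightarrow> mu_occurs (Suc a) (liftm k t) = mu_occurs a t"
  "k \<le> a \<Longrightarrow> mu_occurs_e (Suc a) (liftm_e k e) = mu_occurs_e a e"
  by (induct t and e arbitrary: a k and a k) auto

lemma not_mu_occurs_liftm_self:
  "\<not> mu_occurs k (liftm k t)"
  "\<not> mu_occurs_e k (liftm_e k e)"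
  by (induct t and e arbitrary: k and k) auto

lemma ssubst_not_mu_occurs:
  "\<not> mu_occurs a t \<Longrightarrow> ssubst t a ws = t"
  "\<not> mu_occurs_e a e \<Longrightarrow> ssubst_e e a ws = e"
  by (induct t and e arbitrary: a ws and a ws) auto

lemma apps_append: "apps t (xs @ ys) = apps (apps t xs) ys"
  by (induct xs arbitrary: t) auto

lemma liftl_apps: "liftl k (apps t ws) = apps (liftl k t) (map (liftl_e k) ws)"
  by (induct ws arbitrary: t) auto

lemma liftm_apps: "liftm k (apps t ws) = apps (liftm k t) (map (liftm_e k) ws)"
  by (induct ws arbitrary: t) auto

lemma subst_apps: "subst (apps t ws) k s = apps (subst t k s) (map (\<lambda>w. subst_e w k s) ws)"
  by (induct ws arbitrary: t) auto

lemma ssubst_apps: "ssubst (apps t ws) a vs = apps (ssubst t a vs) (map (\<lambda>w. ssubst_e w a vs) ws)"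
  by (induct ws arbitrary: t) auto

lemma liftl_ssubst:
  "liftl k (ssubst t a ws) = ssubst (liftl k t) a (map (liftl_e k) ws)"
  "liftl_e k (ssubst_e e a ws) = ssubst_e (liftl_e k e) a (map (liftl_e k) ws)"
  by (induct t and e arbitrary: k a ws and k a ws)
     (auto simp: liftl_apps liftl_liftl liftl_liftm comp_def)

lemma liftm_ssubst:
  "liftm k (ssubst t a ws) = ssubst (liftm k t) (if a < k then a else Suc a) (map (liftm_e k) ws)"
  "liftm_e k (ssubst_e e a ws) = ssubst_e (liftm_e k e) (if a < k then a else Suc a) (map (liftm_e k) ws)"
  by (induct t and e arbitrary: k a ws and k a ws)
     (auto simp: liftm_apps liftm_liftm liftl_liftm comp_def)

lemma subst_ssubst:
  "\<not> mu_occurs a s \<Longrightarrow> subst (ssubst t a ws) k s = ssubst (subst t k s) a (map (\<lambda>w. subst_e w k s) ws)"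
  "\<not> mu_occurs a s \<Longrightarrow> subst_e (ssubst_e e a ws) k s = ssubst_e (subst_e e k s) a (map (\<lambda>w. subst_e w k s) ws)"
  by (induct t and e arbitrary: k a s ws and k a s ws)
     (auto simp: subst_apps liftl_subst_above liftm_subst mu_occurs_liftl mu_occurs_liftm ssubst_not_mu_occurs comp_def)

lemma ssubst_subst:
  "ssubst (subst u k v) a ws = subst (ssubst u a (map (liftl_e k) ws)) k (ssubst v a ws)"
  "ssubst_e (subst_e e k v) a ws = subst_e (ssubst_e e a (map (liftl_e k) ws)) k (ssubst v a ws)"
  by (induct u and e arbitrary: k a v ws and k a v ws)
     (auto simp: subst_apps liftl_ssubst liftm_ssubst liftl_liftl liftl_liftm subst_liftl comp_def)

lemma ssubst_ssubst:
  "a \<noteq> b \<Longrightarrow> (\<forall>w\<in>set ws. \<not> mu_occurs_e b w) \<Longrightarrow>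
   ssubst (ssubst t b vs) a ws = ssubst (ssubst t a ws) b (map (\<lambda>v. ssubst_e v a ws) vs)"
  "a \<noteq> b \<Longrightarrow> (\<forall>w\<in>set ws. \<not> mu_occurs_e b w) \<Longrightarrow>
   ssubst_e (ssubst_e e b vs) a ws = ssubst_e (ssubst_e e a ws) b (map (\<lambda>v. ssubst_e v a ws) vs)"
  by (induct t and e arbitrary: a b vs ws and a b vs ws)
     (auto simp: ssubst_apps liftl_ssubst liftm_ssubst mu_occurs_liftl mu_occurs_liftm ssubst_not_mu_occurs comp_def map_idI)

lemma ssubst_append:
  "(\<forall>w\<in>set vs. \<not> mu_occurs_e a w) \<Longrightarrow> ssubst (ssubst t a vs) a ws = ssubst t a (vs @ ws)"
  "(\<forall>w\<in>set vs. \<not> mu_occurs_e a w) \<Longrightarrow> ssubst_e (ssubst_e e a vs) a ws = ssubst_e e a (vs @ ws)"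
  by (induct t and e arbitrary: a vs ws and a vs ws)
     (auto simp: ssubst_apps mu_occurs_liftl mu_occurs_liftm ssubst_not_mu_occurs comp_def map_idI apps_append)

lemma ssubst_liftm_Cons:
  "ssubst (ssubst t 0 [liftm_e 0 w]) 0 (map (liftm_e 0) ws) = ssubst t 0 (map (liftm_e 0) (w # ws))"
  using ssubst_append(1)[of "[liftm_e 0 w]" 0 t "map (liftm_e 0) ws"]
  by (simp add: not_mu_occurs_liftm_self)

section \<open>Reduction is stable under lifting and substitution\<close>

lemma red_apps: "red t t' \<Longrightarrow> red (apps t ws) (apps t' ws)"
  by (induct ws arbitrary: t t') (auto intro: red_red_e.c_AppL)

lemma red_liftl:
  "red t t' \<Longrightarrow> red (liftl i t) (liftl i t')"
  "red_e e e' \<Longrightarrow> red_e (liftl_e i e) (liftl_e i e')"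
proof (induct arbitrary: i and i rule: red_red_e.inducts)
  case (beta u v)
  show ?case using red_red_e.beta[of "liftl (Suc i) u" "liftl i v"]
    by (simp add: liftl_subst_below)
next
  case (case1 t u1 u2)
  show ?case using red_red_e.case1[of "liftl i t" "liftl (Suc i) u1" "liftl (Suc i) u2"]
    by (simp add: liftl_subst_below)
next
  case (case2 t u1 u2)
  show ?case using red_red_e.case2[of "liftl i t" "liftl (Suc i) u1" "liftl (Suc i) u2"]
    by (simp add: liftl_subst_below)
next
  case (comm t u1 u2 e)
  show ?case
    using red_red_e.comm[of "liftl i t" "liftl (Suc i) u1" "liftl (Suc i) u2" "liftl_e i e"]
    by (simp add: liftl_liftl)
next
  case (mu t e)
  show ?case using red_red_e.mu[of "liftl i t" "liftl_e i e"]
    by (simp add: liftl_ssubst liftl_liftm)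
qed (auto intro: red_red_e.intros)

lemma red_liftm:
  "red t t' \<Longrightarrow> red (liftm i t) (liftm i t')"
  "red_e e e' \<Longrightarrow> red_e (liftm_e i e) (liftm_e i e')"
proof (induct arbitrary: i and i rule: red_red_e.inducts)
  case (beta u v)
  show ?case using red_red_e.beta[of "liftm i u" "liftm i v"]
    by (simp add: liftm_subst)
next
  case (case1 t u1 u2)
  show ?case using red_red_e.case1[of "liftm i t" "liftm i u1" "liftm i u2"]
    by (simp add: liftm_subst)
next
  case (case2 t u1 u2)
  show ?case using red_red_e.case2[of "liftm i t" "liftm i u1" "liftm i u2"]
    by (simp add: liftm_subst)
next
  case (comm t u1 u2 e)
  show ?case
    using red_red_e.comm[of "liftm i t" "liftm i u1" "liftm i u2" "liftm_e i e"]
    by (simp add: liftl_liftm)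
next
  case (mu t e)
  show ?case using red_red_e.mu[of "liftm (Suc i) t" "liftm_e i e"]
    by (simp add: liftm_ssubst liftm_liftm)
qed (auto intro: red_red_e.intros)

lemma red_subst:
  "red t t' \<Longrightarrow> red (subst t k s) (subst t' k s)"
  "red_e e e' \<Longrightarrow> red_e (subst_e e k s) (subst_e e' k s)"
proof (induct arbitrary: k s and k s rule: red_red_e.inducts)
  case (beta u v)
  show ?case using red_red_e.beta[of "subst u (Suc k) (liftl 0 s)" "subst v k s"]
    by (simp add: subst_subst)
next
  case (case1 t u1 u2)
  show ?case
    using red_red_e.case1[of "subst t k s" "subst u1 (Suc k) (liftl 0 s)" "subst u2 (Suc k) (liftl 0 s)"]
    by (simp add: subst_subst)
next
  case (case2 t u1 u2)
  show ?case
    using red_red_e.case2[of "subst t k s" "subst u1 (Suc k) (liftl 0 s)" "subst u2 (Suc k) (liftl 0 s)"]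
    by (simp add: subst_subst)
next
  case (comm t u1 u2 e)
  show ?case
    using red_red_e.comm[of "subst t k s" "subst u1 (Suc k) (liftl 0 s)" "subst u2 (Suc k) (liftl 0 s)" "subst_e e k s"]
    by (simp add: liftl_subst_above)
next
  case (mu t e)
  show ?case using red_red_e.mu[of "subst t k (liftm 0 s)" "subst_e e k s"]
    by (simp add: subst_ssubst not_mu_occurs_liftm_self liftm_subst)
qed (auto intro: red_red_e.intros)

lemma red_ssubst:
  "red t t' \<Longrightarrow> red (ssubst t a ws) (ssubst t' a ws)"
  "red_e e e' \<Longrightarrow> red_e (ssubst_e e a ws) (ssubst_e e' a ws)"
proof (induct arbitrary: a ws and a ws rule: red_red_e.inducts)
  case (beta u v)
  show ?case
    using red_red_e.beta[of "ssubst u a (map (liftl_e 0) ws)" "ssubst v a ws"]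
    by (simp add: ssubst_subst)
next
  case (case1 t u1 u2)
  show ?case
    using red_red_e.case1[of "ssubst t a ws" "ssubst u1 a (map (liftl_e 0) ws)" "ssubst u2 a (map (liftl_e 0) ws)"]
    by (simp add: ssubst_subst)
next
  case (case2 t u1 u2)
  show ?case
    using red_red_e.case2[of "ssubst t a ws" "ssubst u1 a (map (liftl_e 0) ws)" "ssubst u2 a (map (liftl_e 0) ws)"]
    by (simp add: ssubst_subst)
next
  case (comm t u1 u2 e)
  show ?case
    using red_red_e.comm[of "ssubst t a ws" "ssubst u1 a (map (liftl_e 0) ws)" "ssubst u2 a (map (liftl_e 0) ws)" "ssubst_e e a ws"]
    by (simp add: liftl_ssubst)
next
  case (mu t e)
  show ?case
    using red_red_e.mu[of "ssubst t (Suc a) (map (liftm_e 0) ws)" "ssubst_e e a ws"]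
    by (simp add: ssubst_ssubst not_mu_occurs_liftm_self liftm_ssubst)
next
  case (c_Named t t' b)
  then show ?case by (auto intro: red_red_e.intros red_apps)
qed (auto intro: red_red_e.intros)

lemma reds_congs:
  "red\<^sup>*\<^sup>* t t' \<Longrightarrow> red\<^sup>*\<^sup>* (Lam t) (Lam t')"
  "red\<^sup>*\<^sup>* t t' \<Longrightarrow> red\<^sup>*\<^sup>* (Mu t) (Mu t')"
  "red\<^sup>*\<^sup>* t t' \<Longrightarrow> red\<^sup>*\<^sup>* (Inj1 t) (Inj1 t')"
  "red\<^sup>*\<^sup>* t t' \<Longrightarrow> red\<^sup>*\<^sup>* (Inj2 t) (Inj2 t')"
  "red\<^sup>*\<^sup>* t t' \<Longrightarrow> red\<^sup>*\<^sup>* (Named b t) (Named b t')"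
  "red\<^sup>*\<^sup>* t t' \<Longrightarrow> red_e\<^sup>*\<^sup>* (Arg t) (Arg t')"
  "red\<^sup>*\<^sup>* t t' \<Longrightarrow> red\<^sup>*\<^sup>* (App t e) (App t' e)"
  "red_e\<^sup>*\<^sup>* e e' \<Longrightarrow> red\<^sup>*\<^sup>* (App t e) (App t e')"
  "red\<^sup>*\<^sup>* t t' \<Longrightarrow> red\<^sup>*\<^sup>* (Pair t u) (Pair t' u)"
  "red\<^sup>*\<^sup>* u u' \<Longrightarrow> red\<^sup>*\<^sup>* (Pair t u) (Pair t u')"
  "red\<^sup>*\<^sup>* u u' \<Longrightarrow> red_e\<^sup>*\<^sup>* (Case u v) (Case u' v)"
  "red\<^sup>*\<^sup>* v v' \<Longrightarrow> red_e\<^sup>*\<^sup>* (Case u v) (Case u v')"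
  by (induct rule: rtranclp_induct; auto intro: rtranclp.rtrancl_into_rtrancl red_red_e.intros red_apps)+

lemma reds_apps: "red\<^sup>*\<^sup>* t t' \<Longrightarrow> red\<^sup>*\<^sup>* (apps t ws) (apps t' ws)"
  by (induct rule: rtranclp_induct) (auto intro: rtranclp.rtrancl_into_rtrancl red_apps)

lemmas reds_binary_congs =
  rtranclp_trans[OF reds_congs(9,10)]
  rtranclp_trans[OF reds_congs(7,8)]
  rtranclp_trans[OF reds_congs(11,12)]

lemma red_subst_arg:
  "red s s' \<Longrightarrow> red\<^sup>*\<^sup>* (subst t k s) (subst t k s')"
  "red s s' \<Longrightarrow> red_e\<^sup>*\<^sup>* (subst_e e k s) (subst_e e k s')"
proof (induct t and e arbitrary: k s s' and k s s')
  case (Lam t)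
  then show ?case by (auto intro!: reds_congs(1) Lam(1) red_liftl)
next
  case (Mu t)
  then show ?case by (auto intro!: reds_congs(2) Mu(1) red_liftm)
next
  case (Case u v)
  then show ?case by (auto intro!: reds_binary_congs(3) Case(1,2) red_liftl)
qed (auto intro: reds_congs reds_binary_congs)

abbreviation red_list :: "elim list \<Rightarrow> elim list \<Rightarrow> bool" where
  "red_list ws ws' \<equiv> (ws, ws') \<in> listrel1 {(w, w'). red_e w w'}"

lemma red_list_apps: "red_list ws ws' \<Longrightarrow> red (apps t ws) (apps t ws')"
  by (induction ws arbitrary: t ws') (auto intro: red_apps[OF red_red_e.c_AppR])

lemma red_list_map:
  assumes "\<And>w w'. red_e w w' \<Longrightarrow> red_e (f w) (f w')"
  shows "red_list ws ws' \<Longrightarrow> red_list (map f ws) (map f ws')"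
  by (induction ws arbitrary: ws') (auto intro: assms)

lemma red_ssubst_arg:
  "red_list ws ws' \<Longrightarrow> red\<^sup>*\<^sup>* (ssubst t a ws) (ssubst t a ws')"
  "red_list ws ws' \<Longrightarrow> red_e\<^sup>*\<^sup>* (ssubst_e e a ws) (ssubst_e e a ws')"
proof (induct t and e arbitrary: a ws ws' and a ws ws')
  case (Named b t)
  show ?case
  proof (cases "b = a")
    case True
    have "red\<^sup>*\<^sup>* (apps (ssubst t a ws) ws) (apps (ssubst t a ws') ws)"
      using Named by (intro reds_apps) blast
    also have "red (apps (ssubst t a ws') ws) (apps (ssubst t a ws') ws')"
      using Named(2) by (rule red_list_apps)
    finally show ?thesis using True by (simp add: reds_congs(5))
  next
    case False
    then show ?thesis using Named by (simp add: reds_congs(5))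
  qed
next
  case (Lam t)
  then show ?case by (auto intro!: reds_congs(1) Lam(1) red_list_map red_liftl)
next
  case (Mu t)
  then show ?case by (auto intro!: reds_congs(2) Mu(1) red_list_map red_liftm)
next
  case (Case u v)
  then show ?case by (auto intro!: reds_binary_congs(3) Case(1,2) red_list_map red_liftl)
qed (auto intro: reds_congs reds_binary_congs)

section \<open>Strong normalisation as an accessible part\<close>

lemma termip_iff_no_infinite_chain:
  "termip r x \<longleftrightarrow> \<not> (\<exists>f. f 0 = x \<and> (\<forall>n. r (f n) (f (Suc n))))"
proof
  assume "termip r x"
  then show "\<not> (\<exists>f. f 0 = x \<and> (\<forall>n. r (f n) (f (Suc n))))"
  proof (induction rule: accp_induct_rule)
    case (1 x)
    show ?case
    proof
      assume "\<exists>f. f 0 = x \<and> (\<forall>n. r (f n) (f (Suc n)))"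
      then obtain f where "f 0 = x" and f: "\<forall>n. r (f n) (f (Suc n))" by blast
      then have "r x (f 1)" by (metis One_nat_def)
      moreover have "\<exists>g. g 0 = f 1 \<and> (\<forall>n. r (g n) (g (Suc n)))"
        using f by (intro exI[of _ "\<lambda>n. f (Suc n)"]) simp
      ultimately show False using "1.IH" by blast
    qed
  qed
next
  assume no_chain: "\<not> (\<exists>f. f 0 = x \<and> (\<forall>n. r (f n) (f (Suc n))))"
  show "termip r x"
  proof (rule ccontr)
    define next_step where "next_step y = (SOME z. r y z \<and> \<not> termip r z)" for y
    have next_step: "r y (next_step y) \<and> \<not> termip r (next_step y)" if y_nonterm: "\<not> termip r y" for y
    proof -
      obtain z where "r y z" "\<not> termip r z"
        using not_accp_down[OF y_nonterm] by auto
      then show ?thesis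
        unfolding next_step_def by (intro someI[where P = "\<lambda>z. r y z \<and> \<not> termip r z"] conjI)
    qed
    assume "\<not> termip r x"
    then have "\<not> termip r ((next_step ^^ n) x)" for n
      by (induction n) (simp_all add: next_step)
    then have "\<exists>f. f 0 = x \<and> (\<forall>n. r (f n) (f (Suc n)))"
      by (intro exI[of _ "\<lambda>n. (next_step ^^ n) x"]) (simp add: next_step)
    with no_chain show False ..
  qed
qed

lemma termip_step: "termip r x \<Longrightarrow> r x y \<Longrightarrow> termip r y"
  by (rule accp_downward) auto

lemma termip_steps: "termip r x \<Longrightarrow> r\<^sup>*\<^sup>* x y \<Longrightarrow> termip r y"
  by (rule accp_downwards) (simp_all add: rtranclp_conversep)

lemma termip_map:
  assumes "termip s (f x)" and "\<And>x y. r x y \<Longrightarrow> s (f x) (f y)"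
  shows "termip r x"
proof -
  have "termip r a" if "termip s b" and "b = f a" for a b
    using that
  proof (induction arbitrary: a rule: accp_induct_rule)
    case (1 b)
    show ?case
    proof (rule accp.accI)
      fix a'
      assume "r\<inverse>\<inverse> a' a"
      then have "s b (f a')" using assms(2) "1.prems" by simp
      then show "termip r a'" using "1.IH"[of "f a'" a'] by (simp add: conversep_iff[abs_def])
    qed
  qed
  with assms(1) show ?thesis by blast
qed

inductive step_prod :: "('a \<Rightarrow> 'a \<Rightarrow> bool) \<Rightarrow> ('b \<Rightarrow> 'b \<Rightarrow> bool) \<Rightarrow> 'a \<times> 'b \<Rightarrow> 'a \<times> 'b \<Rightarrow> bool"
  for r s where
  step_fst: "r a a' \<Longrightarrow> step_prod r s (a, b) (a', b)"
| step_snd: "s b b' \<Longrightarrow> step_prod r s (a, b) (a, b')"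

lemma termip_step_prod:
  assumes "termip r a" and "termip s b"
  shows "termip (step_prod r s) (a, b)"
  using assms
proof (induction arbitrary: b rule: accp_induct_rule)
  case outer: (1 a)
  from outer.prems show ?case
  proof (induction rule: accp_induct_rule)
    case inner: (1 b)
    show ?case
    proof (rule accp.accI)
      fix q
      assume "(step_prod r s)\<inverse>\<inverse> q (a, b)"
      then have "step_prod r s (a, b) q" by simp
      then show "termip (step_prod r s) q"
      proof cases
        case (step_fst a')
        then show ?thesis using outer.IH inner.hyps by (simp add: conversep_iff[abs_def])
      next
        case (step_snd b')
        then show ?thesis using inner.IH by (simp add: conversep_iff[abs_def])
      qed
    qed
  qed
qed

lemma termip_by_parameter:
  assumes "termip R p" and "P p"
    and step: "\<And>q N. P q \<Longrightarrow> r (H q) N \<Longrightarrow> termip r N \<or> (\<exists>q'. R q q' \<and> P q' \<and> N = H q')"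
  shows "termip r (H p)"
  using assms(1,2)
proof (induction rule: accp_induct_rule)
  case (1 p)
  show ?case
    by (rule accp.accI) (use step "1.IH" "1.prems" in fastforce)
qed

lemma termip_red_list:
  assumes "\<forall>w\<in>set ws. termip red_e w"
  shows "termip red_list ws"
proof -
  have "ws \<in> Wellfounded.acc (listrel1 {(w', w). red_e w w'})"
    using assms by (intro lists_accD) (auto simp: accp_eq_acc)
  moreover have "listrel1 {(w', w). red_e w w'} = {(ws', ws). red_list ws ws'}"
    using listrel1_converse[of "{(w, w'). red_e w w'}"] by (auto simp: converse_unfold)
  ultimately show ?thesis by (simp add: accp_eq_acc)
qed

lemma termip_red_list_tl: "termip red_list (w # ws) \<Longrightarrow> termip red_list ws"
  by (erule termip_map[where f = "Cons w"]) simp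

section \<open>Reducts of applied terms\<close>

definition no_inner_case :: "elim list \<Rightarrow> bool" where
  "no_inner_case ws \<longleftrightarrow> (\<forall>w\<in>set (butlast ws). \<not> is_case w)"

lemma no_inner_case_simps [simp]:
  "no_inner_case []"
  "no_inner_case (w # ws) \<longleftrightarrow> (ws \<noteq> [] \<longrightarrow> \<not> is_case w) \<and> no_inner_case ws"
  by (auto simp: no_inner_case_def)

lemma nice_iff: "nice ws \<longleftrightarrow> (\<forall>w\<in>set ws. SN_e w) \<and> no_inner_case ws"
  by (auto simp: nice_def no_inner_case_def all_set_conv_all_nth nth_butlast less_diff_conv)

lemma red_e_is_case: "red_e w w' \<Longrightarrow> is_case w' = is_case w"
  by (erule red_e.cases) (auto simp: is_case_def)

lemma red_list_no_inner_case: "red_list ws ws' \<Longrightarrow> no_inner_case ws \<Longrightarrow> no_inner_case ws'"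
  by (induction ws arbitrary: ws') (auto simp: red_e_is_case)

inductive_cases red_constructor_cases [elim!]:
  "red (Var x) N" "red (Lam t) N" "red (Pair t1 t2) N" "red (Inj1 t) N" "red (Inj2 t) N"
  "red (Mu t) N" "red_e (Arg t) e" "red_e Proj1 e" "red_e Proj2 e" "red_e (Case u v) e"

inductive root_red :: "trm \<Rightarrow> trm \<Rightarrow> bool" where
  "root_red (App (Lam u) (Arg v)) (subst u 0 v)"
| "root_red (App (Pair t1 t2) Proj1) t1"
| "root_red (App (Pair t1 t2) Proj2) t2"
| "root_red (App (Inj1 t) (Case u1 u2)) (subst u1 0 t)"
| "root_red (App (Inj2 t) (Case u1 u2)) (subst u2 0 t)"
| "root_red (App (App t (Case u1 u2)) e)
     (App t (Case (App u1 (liftl_e 0 e)) (App u2 (liftl_e 0 e))))"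
| "root_red (App (Mu t) e) (Mu (ssubst t 0 [liftm_e 0 e]))"

lemma red_App_cases:
  "red (App t e) N \<Longrightarrow>
     root_red (App t e) N \<or> (\<exists>t'. red t t' \<and> N = App t' e) \<or> (\<exists>e'. red_e e e' \<and> N = App t e')"
  by (erule red.cases) (auto intro: root_red.intros)

lemma root_red_App_App: "root_red (App (App t e) w) N \<Longrightarrow> is_case e"
  by (erule root_red.cases) (auto simp: is_case_def)

lemma red_apps_cases:
  assumes "no_inner_case ws" and "red (apps t ws) N"
  shows "(\<exists>t'. red t t' \<and> N = apps t' ws) \<or> (\<exists>ws'. red_list ws ws' \<and> N = apps t ws') \<or>
    (\<exists>w ws0 t'. ws = w # ws0 \<and> root_red (App t w) t' \<and> N = apps t' ws0)"
  using assms
proof (induction ws arbitrary: t)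
  case (Cons w ws)
  from Cons.IH[of "App t w"] Cons.prems consider
      (head) t' where "red (App t w) t'" "N = apps t' ws"
    | (args) ws' where "red_list ws ws'" "N = apps (App t w) ws'"
    | (root) w2 ws0 t' where "ws = w2 # ws0" "root_red (App (App t w) w2) t'"
    by auto
  then show ?case
  proof cases
    case head
    then show ?thesis using red_App_cases[OF head(1)] by auto
  next
    case root
    then show ?thesis using Cons.prems(1) by (auto dest: root_red_App_App)
  qed auto
qed simp

section \<open>Closure properties of strongly normalising terms\<close>

lemma termip_apps_by_parameter:
  fixes H :: "'p \<Rightarrow> trm"
  assumes "termip R p" and "termip red_list ws" and "P p ws"
    and invariant: "\<And>p ws. P p ws \<Longrightarrow> no_inner_case ws"
    and head_step: "\<And>p ws N. P p ws \<Longrightarrow> red (H p) N \<Longrightarrow>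
      termip red (apps N ws) \<or> (\<exists>p'. R p p' \<and> P p' ws \<and> N = H p')"
    and args_step: "\<And>p ws ws'. P p ws \<Longrightarrow> red_list ws ws' \<Longrightarrow> P p ws'"
    and root_step: "\<And>p w ws N. P p (w # ws) \<Longrightarrow> root_red (App (H p) w) N \<Longrightarrow> termip red (apps N ws)"
  shows "termip red (apps (H p) ws)"
proof -
  have "termip red ((\<lambda>(p, ws). apps (H p) ws) (p, ws))"
  proof (rule termip_by_parameter[where P = "\<lambda>(p, ws). P p ws" and R = "step_prod R red_list"])
    show "termip (step_prod R red_list) (p, ws)" using assms(1,2) by (rule termip_step_prod)
  next
    fix q N
    assume "(\<lambda>(p, ws). P p ws) q" and "red ((\<lambda>(p, ws). apps (H p) ws) q) N"
    moreover obtain p' ws' where q: "q = (p', ws')" by (cases q)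
    ultimately have P: "P p' ws'" and "red (apps (H p') ws') N" by simp_all
    with red_apps_cases[OF invariant] consider
        (head) t' where "red (H p') t'" "N = apps t' ws'"
      | (args) ws'' where "red_list ws' ws''" "N = apps (H p') ws''"
      | (root) w ws0 t' where "ws' = w # ws0" "root_red (App (H p') w) t'" "N = apps t' ws0"
      by blast
    then show "termip red N \<or> (\<exists>q'. step_prod R red_list q q' \<and> (\<lambda>(p, ws). P p ws) q'
        \<and> N = (\<lambda>(p, ws). apps (H p) ws) q')"
    proof cases
      case head
      then show ?thesis using head_step[OF P head(1)] q by (auto intro: step_prod.step_fst)
    next
      case args
      then show ?thesis using args_step[OF P args(1)] q by (auto intro: step_prod.step_snd)
    next
      case root
      then show ?thesis using root_step P by blast
    qed
  qed (use assms(3) in simp)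
  then show ?thesis by simp
qed

text \<open>The premise \<open>root_stuck\<close> holds either because \<open>H p\<close> ends in a non-case eliminator, so
  that \<open>(H p w)\<close> is no redex, or trivially when there are no arguments, as for the case
  redexes of part (4).\<close>

lemma termip_apps_expansion:
  fixes H C :: "'p \<Rightarrow> trm"
  assumes head_red: "\<And>p N. red (H p) N \<Longrightarrow> N = C p \<or> (\<exists>p'. R p p' \<and> N = H p')"
    and contractum_reds: "\<And>p p'. R p p' \<Longrightarrow> red\<^sup>*\<^sup>* (C p) (C p')"
    and root_stuck: "\<And>p w N. root_red (App (H p) w) N \<Longrightarrow> ws = []"
    and "termip R p" "termip red_list ws" "no_inner_case ws"
    and "termip red (apps (C p) ws)"
  shows "termip red (apps (H p) ws)"
proof -
  let ?P = "\<lambda>p ws'. length ws' = length ws \<and> no_inner_case ws' \<and> termip red (apps (C p) ws')"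
  show ?thesis
  proof (rule termip_apps_by_parameter[where P = ?P])
    fix p ws' N
    assume P: "?P p ws'" and "red (H p) N"
    from head_red[OF this(2)]
    show "termip red (apps N ws') \<or> (\<exists>p'. R p p' \<and> ?P p' ws' \<and> N = H p')"
    proof
      assume "N = C p"
      with P show ?thesis by simp
    next
      assume "\<exists>p'. R p p' \<and> N = H p'"
      with P show ?thesis by (blast intro: termip_steps reds_apps contractum_reds)
    qed
  next
    fix p ws' ws''
    assume "?P p ws'" and "red_list ws' ws''"
    then show "?P p ws''"
      by (auto dest: listrel1_eq_len red_list_no_inner_case intro: termip_step red_list_apps)
  next
    fix p w ws' N
    assume "?P p (w # ws')" and "root_red (App (H p) w) N"
    then show "termip red (apps N ws')" using root_stuck by force
  qed (use assms in simp_all)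
qed

lemma termip_apps_Var:
  assumes "termip red_list ws" and "no_inner_case ws"
  shows "termip red (apps (Var x) ws)"
  using assms
proof (rule termip_by_parameter[where H = "\<lambda>ws. apps (Var x) ws" and P = no_inner_case])
  fix ws' N
  assume nic: "no_inner_case ws'" and "red (apps (Var x) ws') N"
  from red_apps_cases[OF this] have "\<exists>ws''. red_list ws' ws'' \<and> N = apps (Var x) ws''"
    by (auto elim: root_red.cases)
  then show "termip red N \<or> (\<exists>ws''. red_list ws' ws'' \<and> no_inner_case ws'' \<and> N = apps (Var x) ws'')"
    using red_list_no_inner_case nic by blast
qed

lemma termip_apps_beta:
  assumes "termip red u" and "termip red (apps (subst t 0 u) ws)"
    and "termip red_list ws" and "no_inner_case ws"
  shows "termip red (apps (App (Lam t) (Arg u)) ws)"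
proof -
  let ?H = "\<lambda>(t, u). App (Lam t) (Arg u)" and ?C = "\<lambda>(t, u). subst t 0 u"
  have "termip red t"
    using assms(2) by (rule termip_map[where f = "\<lambda>t. apps (subst t 0 u) ws"]) (intro red_apps red_subst)
  have "termip red (apps (?H (t, u)) ws)"
  proof (rule termip_apps_expansion[where H = ?H and C = ?C and R = "step_prod red red"])
    fix p N
    assume "red (?H p) N"
    then show "N = ?C p \<or> (\<exists>p'. step_prod red red p p' \<and> N = ?H p')"
      by (cases p) (auto dest!: red_App_cases elim!: root_red.cases intro: step_prod.intros)
  next
    fix p p'
    assume "step_prod red red p p'"
    then show "red\<^sup>*\<^sup>* (?C p) (?C p')"
      by (cases rule: step_prod.cases) (auto intro: red_subst red_subst_arg)
  next
    fix p w N
    assume "root_red (App (?H p) w) N"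
    then show "ws = []" by (cases p) (auto dest: root_red_App_App simp: is_case_def)
  qed (use assms \<open>termip red t\<close> in \<open>simp_all add: termip_step_prod\<close>)
  then show ?thesis by simp
qed

lemma termip_apps_proj1:
  assumes "termip red t1" and "termip red t2" and "termip red (apps t1 ws)"
    and "termip red_list ws" and "no_inner_case ws"
  shows "termip red (apps (App (Pair t1 t2) Proj1) ws)"
proof -
  let ?H = "\<lambda>(t1, t2). App (Pair t1 t2) Proj1"
  have "termip red (apps (?H (t1, t2)) ws)"
  proof (rule termip_apps_expansion[where H = ?H and C = fst and R = "step_prod red red"])
    fix p N
    assume "red (?H p) N"
    then show "N = fst p \<or> (\<exists>p'. step_prod red red p p' \<and> N = ?H p')"
      by (cases p) (auto dest!: red_App_cases elim!: root_red.cases intro: step_prod.intros)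
  next
    fix p p'
    assume "step_prod red red p p'"
    then show "red\<^sup>*\<^sup>* (fst p) (fst p')" by (cases rule: step_prod.cases) auto
  next
    fix p w N
    assume "root_red (App (?H p) w) N"
    then show "ws = []" by (cases p) (auto dest: root_red_App_App simp: is_case_def)
  qed (use assms in \<open>simp_all add: termip_step_prod\<close>)
  then show ?thesis by simp
qed

lemma termip_apps_proj2:
  assumes "termip red t1" and "termip red t2" and "termip red (apps t2 ws)"
    and "termip red_list ws" and "no_inner_case ws"
  shows "termip red (apps (App (Pair t1 t2) Proj2) ws)"
proof -
  let ?H = "\<lambda>(t1, t2). App (Pair t1 t2) Proj2"
  have "termip red (apps (?H (t1, t2)) ws)"
  proof (rule termip_apps_expansion[where H = ?H and C = snd and R = "step_prod red red"])
    fix p N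
    assume "red (?H p) N"
    then show "N = snd p \<or> (\<exists>p'. step_prod red red p p' \<and> N = ?H p')"
      by (cases p) (auto dest!: red_App_cases elim!: root_red.cases intro: step_prod.intros)
  next
    fix p p'
    assume "step_prod red red p p'"
    then show "red\<^sup>*\<^sup>* (snd p) (snd p')" by (cases rule: step_prod.cases) auto
  next
    fix p w N
    assume "root_red (App (?H p) w) N"
    then show "ws = []" by (cases p) (auto dest: root_red_App_App simp: is_case_def)
  qed (use assms in \<open>simp_all add: termip_step_prod\<close>)
  then show ?thesis by simp
qed

lemma termip_Inj1_Case:
  assumes "termip red t" and "termip red u1" and "termip red u2" and "termip red (subst u1 0 t)"
  shows "termip red (App (Inj1 t) (Case u1 u2))"
proof -
  let ?H = "\<lambda>(t, u1, u2). App (Inj1 t) (Case u1 u2)" and ?C = "\<lambda>(t, u1, u2). subst u1 0 t"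
  have "termip red (apps (?H (t, u1, u2)) [])"
  proof (rule termip_apps_expansion[where H = ?H and C = ?C and R = "step_prod red (step_prod red red)"])
    fix p N
    assume "red (?H p) N"
    then show "N = ?C p \<or> (\<exists>p'. step_prod red (step_prod red red) p p' \<and> N = ?H p')"
      by (cases p) (auto dest!: red_App_cases elim!: root_red.cases
          intro: step_prod.intros step_prod.step_snd[where s = "step_prod red red", OF step_prod.intros(1)]
            step_prod.step_snd[where s = "step_prod red red", OF step_prod.intros(2)])
  next
    fix p p'
    assume "step_prod red (step_prod red red) p p'"
    then show "red\<^sup>*\<^sup>* (?C p) (?C p')"
      by (auto elim!: step_prod.cases intro: red_subst red_subst_arg)
  qed (use assms in \<open>simp_all add: termip_step_prod termip_red_list\<close>)
  then show ?thesis by simp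
qed

lemma termip_Inj2_Case:
  assumes "termip red t" and "termip red u1" and "termip red u2" and "termip red (subst u2 0 t)"
  shows "termip red (App (Inj2 t) (Case u1 u2))"
proof -
  let ?H = "\<lambda>(t, u1, u2). App (Inj2 t) (Case u1 u2)" and ?C = "\<lambda>(t, u1, u2). subst u2 0 t"
  have "termip red (apps (?H (t, u1, u2)) [])"
  proof (rule termip_apps_expansion[where H = ?H and C = ?C and R = "step_prod red (step_prod red red)"])
    fix p N
    assume "red (?H p) N"
    then show "N = ?C p \<or> (\<exists>p'. step_prod red (step_prod red red) p p' \<and> N = ?H p')"
      by (cases p) (auto dest!: red_App_cases elim!: root_red.cases
          intro: step_prod.intros step_prod.step_snd[where s = "step_prod red red", OF step_prod.intros(1)]
            step_prod.step_snd[where s = "step_prod red red", OF step_prod.intros(2)])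
  next
    fix p p'
    assume "step_prod red (step_prod red red) p p'"
    then show "red\<^sup>*\<^sup>* (?C p) (?C p')"
      by (auto elim!: step_prod.cases intro: red_subst red_subst_arg)
  qed (use assms in \<open>simp_all add: termip_step_prod termip_red_list\<close>)
  then show ?thesis by simp
qed

lemma termip_apps_Mu:
  assumes "termip red (ssubst t 0 (map (liftm_e 0) ws))"
    and "termip red_list ws" and "no_inner_case ws"
  shows "termip red (apps (Mu t) ws)"
  using assms
proof (induction "length ws" arbitrary: t ws rule: less_induct)
  case less
  let ?P = "\<lambda>t ws'. length ws' = length ws \<and> no_inner_case ws' \<and> termip red_list ws'
    \<and> termip red (ssubst t 0 (map (liftm_e 0) ws'))"
  have "termip red t"
    using less.prems(1) by (rule termip_map[where f = "\<lambda>t. ssubst t 0 (map (liftm_e 0) ws)"]) (rule red_ssubst)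
  then show ?case
  proof (rule termip_apps_by_parameter[where P = ?P and R = red])
    fix t' ws' N
    assume "?P t' ws'" and "red (Mu t') N"
    then show "termip red (apps N ws') \<or> (\<exists>t''. red t' t'' \<and> ?P t'' ws' \<and> N = Mu t'')"
      by (auto intro: termip_step red_ssubst)
  next
    fix t' ws' ws''
    assume "?P t' ws'" and "red_list ws' ws''"
    then show "?P t' ws''"
      by (auto dest: listrel1_eq_len red_list_no_inner_case
          intro: termip_step termip_steps red_ssubst_arg red_list_map red_liftm)
  next
    fix t' w ws0 N
    assume P: "?P t' (w # ws0)" and "root_red (App (Mu t') w) N"
    then have N: "N = Mu (ssubst t' 0 [liftm_e 0 w])" by (auto elim: root_red.cases)
    show "termip red (apps N ws0)" unfolding N
    proof (rule less.hyps)
      show "length ws0 < length ws" using P by simp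
      show "termip red (ssubst (ssubst t' 0 [liftm_e 0 w]) 0 (map (liftm_e 0) ws0))"
        using P by (simp add: ssubst_liftm_Cons)
    qed (use P termip_red_list_tl in auto)
  qed (use less.prems in simp_all)
qed

theorem lemma3:
  fixes ws :: "elim list"
  assumes "nice ws"
  shows "(\<forall>x. SN (apps (Var x) ws))
    \<and> (\<forall>t u. SN u \<and> SN (apps (subst t 0 u) ws) \<longrightarrow> SN (apps (App (Lam t) (Arg u)) ws))
    \<and> (\<forall>t1 t2. SN t1 \<and> SN t2 \<longrightarrow>
          (SN (apps t1 ws) \<longrightarrow> SN (apps (App (Pair t1 t2) Proj1) ws))
        \<and> (SN (apps t2 ws) \<longrightarrow> SN (apps (App (Pair t1 t2) Proj2) ws)))
    \<and> (\<forall>t u1 u2. SN t \<and> SN u1 \<and> SN u2 \<longrightarrow>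
          (SN (subst u1 0 t) \<longrightarrow> SN (App (Inj1 t) (Case u1 u2)))
        \<and> (SN (subst u2 0 t) \<longrightarrow> SN (App (Inj2 t) (Case u1 u2))))
    \<and> (\<forall>t. SN (ssubst t 0 (map (liftm_e 0) ws)) \<longrightarrow> SN (apps (Mu t) ws))"
proof -
  have SN_termip: "SN = termip red" and SN_e_termip: "SN_e = termip red_e"
    by (simp_all add: fun_eq_iff SN_def SN_e_def termip_iff_no_infinite_chain)
  from assms have ws: "termip red_list ws" "no_inner_case ws"
    by (simp_all add: nice_iff SN_e_termip termip_red_list)
  show ?thesis
    unfolding SN_termip using ws
    by (auto intro: termip_apps_Var termip_apps_beta termip_apps_proj1 termip_apps_proj2
        termip_Inj1_Case termip_Inj2_Case termip_apps_Mu)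
qed

end
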